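(* Let $1\le q<2$ and let $\mathbf{x}_k$ be a data point with $\mathbf{x}_k\ne\mathbf{M}$. Then there exists $\delta_0>0$ such that for every $\mathbf{y}\in B(\mathbf{x}_k,\delta_0)\setminus\{\mathbf{x}_k\}$ there is an integer $s\ge1$ (depending on $\mathbf{y}$) with $\mathbf{T}_1^{j}(\mathbf{y})\in B(\mathbf{x}_k,\delta_0)$ for $0\le j\le s-1$ and $\mathbf{T}_1^{s}(\mathbf{y})\notin B(\mathbf{x}_k,\delta_0)$. Here $B(\mathbf{x}_k,\delta_0)$ is the open Euclidean ball and $\mathbf{T}_1^{j}$ is the $j$-fold iterate of $\mathbf{T}_1$.
   Context: Let $\mathbf{x}_1,\dots,\mathbf{x}_m\in\mathbb{R}^d$ be distinct data points, not all lying on a common affine line, and $\eta_1,\dots,\eta_m>0$. $C_q(\mathbf{y})=\sum_{i=1}^m \eta_i^q\|\mathbf{y}-\mathbf{x}_i\|^q$ is strictly convex with unique minimizer $\mathbf{M}$. $\mathbf{T}_1(\mathbf{y})=\frac{\sum_{i} \eta_i^q\|\mathbf{y}-\mathbf{x}_i\|^{q-2}\mathbf{x}_i}{\sum_{i} \eta_i^q\|\mathbf{y}-\mathbf{x}_i\|^{q-2}}$ for $\mathbf{y}\notin\{\mathbf{x}_i\}$, extended by $\mathbf{T}_1(\mathbf{x}_i)=\mathbf{x}_i$. *)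

theory Defs
  imports "HOL-Analysis.Analysis"
begin

definition Cq :: "nat set \<Rightarrow> (nat \<Rightarrow> 'a::euclidean_space) \<Rightarrow> (nat \<Rightarrow> real) \<Rightarrow> real \<Rightarrow> 'a \<Rightarrow> real" where
  "Cq I x \<eta> q y = (\<Sum>i\<in>I. (\<eta> i) powr q * (norm (y - x i)) powr q)"

definition T1 :: "nat set \<Rightarrow> (nat \<Rightarrow> 'a::euclidean_space) \<Rightarrow> (nat \<Rightarrow> real) \<Rightarrow> real \<Rightarrow> 'a \<Rightarrow> 'a" where
  "T1 I x \<eta> q y =
     (if y \<in> x ` I then y
      else (\<Sum>i\<in>I. ((\<eta> i) powr q * (norm (y - x i)) powr (q - 2)) *\<^sub>R x i) /\<^sub>R
           (\<Sum>i\<in>I. (\<eta> i) powr q * (norm (y - x i)) powr (q - 2)))"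

end

theory Submission
  imports Defs
begin

text \<open>Let \<open>R = \<Sum>\<^bsub>i\<noteq>k\<^esub> \<eta>\<^sub>i\<^sup>q \<bar>x\<^sub>k - x\<^sub>i\<bar>\<^bsup>q-2\<^esup> (x\<^sub>i - x\<^sub>k)\<close>. Expanding \<open>C\<^sub>q(M)\<close> around \<open>x\<^sub>k\<close>, with
  nonnegative remainders coming from convexity of \<open>\<bar>\<cdot>\<bar>\<^sup>q\<close>, minimality of \<open>M \<noteq> x\<^sub>k\<close> forces \<open>R \<noteq> 0\<close>
  if \<open>q > 1\<close> and \<open>\<bar>R\<bar> > \<eta>\<^sub>k\<close> if \<open>q = 1\<close>; in the latter case equality would make every remainder
  vanish, which puts all data points on the line through \<open>x\<^sub>k\<close> in direction \<open>M - x\<^sub>k\<close>.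
  Near \<open>x\<^sub>k\<close> one has \<open>T\<^sub>1(y) - x\<^sub>k = N(y) / W(y)\<close> with \<open>N(y) \<rightarrow> R\<close> and \<open>\<bar>y - x\<^sub>k\<bar> W(y) \<rightarrow> \<eta>\<^sub>k\<close>
  (\<open>q = 1\<close>) resp. \<open>\<rightarrow> 0\<close> (\<open>q > 1\<close>). So \<open>T\<^sub>1\<close> multiplies the distance to \<open>x\<^sub>k\<close> by some \<open>c > 1\<close> on a
  small punctured ball, and every orbit starting there has to leave it.\<close>

lemma powr_ge_tangent:
  fixes r s q :: real
  assumes r: "r > 0" and s: "s \<ge> 0" and q: "q \<ge> 1"
  shows "r powr q + q * r powr (q - 1) * (s - r) \<le> s powr q"
proof (cases "s = 0")
  case True
  have "r powr q + q * r powr (q - 1) * (0 - r) = (1 - q) * r powr q"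
    using r by (simp add: powr_diff field_simps)
  also have "\<dots> \<le> 0" using q r by (simp add: mult_nonpos_nonneg)
  finally show ?thesis using True by simp
next
  case False
  then have "s > 0" using s by simp
  have "q * r powr (q - 1) * (s - r) \<le> s powr q - r powr q"
    using \<open>s > 0\<close> r
    by (intro convex_on_imp_above_tangent[where A = "{0<..}"] powr_convex q)
       (auto intro!: derivative_eq_intros simp: interior_open)
  then show ?thesis by simp
qed

definition bregman_norm_powr :: "real \<Rightarrow> 'a::real_inner \<Rightarrow> 'a \<Rightarrow> real" where
  "bregman_norm_powr q a v =
     norm (a + v) powr q - norm a powr q - q * norm a powr (q - 2) * (a \<bullet> v)"

lemma bregman_norm_powr_nonneg:
  fixes a v :: "'a::real_inner"
  assumes a: "a \<noteq> 0" and q: "q \<ge> 1"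
  shows "bregman_norm_powr q a v \<ge> 0"
proof -
  have r: "norm a > 0" using a by simp
  have "norm a powr (q - 1) = norm a powr (q - 2) * norm a"
    using powr_add[of "norm a" "q - 2" 1] r by simp
  then have "q * norm a powr (q - 2) * (a \<bullet> v)
      = q * norm a powr (q - 2) * (a \<bullet> (a + v) - norm a * norm a)"
    by (simp add: inner_add_right dot_square_norm power2_eq_square)
  also have "\<dots> \<le> q * norm a powr (q - 2) * (norm a * norm (a + v) - norm a * norm a)"
    using norm_cauchy_schwarz[of a "a + v"] q r by (intro mult_left_mono) auto
  also have "\<dots> = q * norm a powr (q - 1) * (norm (a + v) - norm a)"
    using \<open>norm a powr (q - 1) = _\<close> by (simp add: algebra_simps)
  finally show ?thesis
    using powr_ge_tangent[OF r norm_ge_zero q, of "a + v"]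
    unfolding bregman_norm_powr_def by linarith
qed

text \<open>For \<open>q = 1\<close> the remainder vanishes only when Cauchy--Schwarz is tight for \<open>a\<close> and \<open>a + v\<close>.\<close>
lemma bregman_norm_powr_1_eq_0_imp_parallel:
  fixes a v :: "'a::real_inner"
  assumes a: "a \<noteq> 0" and v: "v \<noteq> 0" and gap: "bregman_norm_powr 1 a v = 0"
  shows "\<exists>c. a = c *\<^sub>R v"
proof -
  define b where "b = a + v"
  have "norm b - norm a - a \<bullet> v / norm a = 0"
    using gap by (simp add: bregman_norm_powr_def b_def powr_minus divide_inverse mult.commute)
  then have "norm a * norm b = norm a * norm a + a \<bullet> v"
    using a by (simp add: field_simps)
  also have "\<dots> = a \<bullet> b" by (simp add: b_def inner_add_right dot_square_norm power2_eq_square)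
  finally have "norm a *\<^sub>R b = norm b *\<^sub>R a" using norm_cauchy_schwarz_eq by metis
  then have e: "norm a *\<^sub>R v = (norm b - norm a) *\<^sub>R a" by (simp add: b_def algebra_simps)
  then have nb: "norm b - norm a \<noteq> 0" using a v by auto
  have "a = (1 / (norm b - norm a)) *\<^sub>R ((norm b - norm a) *\<^sub>R a)" using nb by simp
  also have "\<dots> = (norm a / (norm b - norm a)) *\<^sub>R v" by (simp flip: e)
  finally show ?thesis ..
qed

definition weight :: "(nat \<Rightarrow> 'a::euclidean_space) \<Rightarrow> (nat \<Rightarrow> real) \<Rightarrow> real \<Rightarrow> nat \<Rightarrow> 'a \<Rightarrow> real" where
  "weight x \<eta> q i y = \<eta> i powr q * norm (y - x i) powr (q - 2)"

text \<open>\<open>pull I x \<eta> q k (x k)\<close> is \<open>-1/q\<close> times the gradient at \<open>x\<^sub>k\<close> of \<open>C\<^sub>q\<close> without its \<open>k\<close>-th term.\<close>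
definition pull :: "nat set \<Rightarrow> (nat \<Rightarrow> 'a::euclidean_space) \<Rightarrow> (nat \<Rightarrow> real) \<Rightarrow> real \<Rightarrow> nat \<Rightarrow> 'a \<Rightarrow> 'a" where
  "pull I x \<eta> q k y = (\<Sum>i\<in>I - {k}. weight x \<eta> q i y *\<^sub>R (x i - x k))"

lemma Cq_expansion_at_data_point:
  assumes "finite I" and "k \<in> I"
  shows "Cq I x \<eta> q (x k + v) =
     Cq I x \<eta> q (x k) - q * (pull I x \<eta> q k (x k) \<bullet> v) + \<eta> k powr q * norm v powr q
     + (\<Sum>i\<in>I - {k}. \<eta> i powr q * bregman_norm_powr q (x k - x i) v)"
proof -
  have "pull I x \<eta> q k (x k) \<bullet> v
      = - (\<Sum>i\<in>I - {k}. \<eta> i powr q * norm (x k - x i) powr (q - 2) * ((x k - x i) \<bullet> v))"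
    unfolding pull_def weight_def inner_sum_left
    by (simp add: sum_negf[symmetric] inner_diff_left algebra_simps)
  then show ?thesis
    using assms unfolding Cq_def bregman_norm_powr_def
    by (simp add: sum.remove sum.distrib sum_subtractf sum_distrib_left algebra_simps
             flip: sum_distrib_left)
       (simp flip: distrib_left)
qed

lemma sum_bregman_at_data_point_nonneg:
  assumes "inj_on x I" and "k \<in> I" and "\<And>i. i \<in> I \<Longrightarrow> \<eta> i > 0" and "q \<ge> 1"
  shows "(\<Sum>i\<in>I - {k}. \<eta> i powr q * bregman_norm_powr q (x k - x i) v) \<ge> 0"
  using assms by (intro sum_nonneg mult_nonneg_nonneg bregman_norm_powr_nonneg)
    (auto simp: inj_on_def)

lemma pull_nonzero_at_data_point:
  assumes fin: "finite I" and inj: "inj_on x I" and eta: "\<And>i. i \<in> I \<Longrightarrow> \<eta> i > 0"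
    and q: "q > 1" and k: "k \<in> I" and M_le: "Cq I x \<eta> q M \<le> Cq I x \<eta> q (x k)"
    and xk: "x k \<noteq> M"
  shows "pull I x \<eta> q k (x k) \<noteq> 0"
proof
  assume "pull I x \<eta> q k (x k) = 0"
  then have "Cq I x \<eta> q (x k) + \<eta> k powr q * norm (M - x k) powr q \<le> Cq I x \<eta> q M"
    using Cq_expansion_at_data_point[OF fin k, of x \<eta> q "M - x k"]
      sum_bregman_at_data_point_nonneg[of x I k \<eta> q "M - x k"] inj k eta q
    by simp
  moreover have "\<eta> k powr q * norm (M - x k) powr q > 0" using eta[OF k] xk by simp
  ultimately show False using M_le by simp
qed

lemma norm_pull_gt_weight_at_data_point:
  assumes fin: "finite I" and inj: "inj_on x I" and not_line: "\<not> collinear (x ` I)"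
    and eta: "\<And>i. i \<in> I \<Longrightarrow> \<eta> i > 0" and k: "k \<in> I"
    and M_le: "Cq I x \<eta> 1 M \<le> Cq I x \<eta> 1 (x k)" and xk: "x k \<noteq> M"
  shows "norm (pull I x \<eta> 1 k (x k)) > \<eta> k"
proof (rule ccontr)
  define v where "v = M - x k"
  define B where "B i = \<eta> i powr 1 * bregman_norm_powr 1 (x k - x i) v" for i
  assume "\<not> norm (pull I x \<eta> 1 k (x k)) > \<eta> k"
  then have "pull I x \<eta> 1 k (x k) \<bullet> v \<le> \<eta> k * norm v"
    using norm_cauchy_schwarz[of "pull I x \<eta> 1 k (x k)" v]
      mult_right_mono[of "norm (pull I x \<eta> 1 k (x k))" "\<eta> k" "norm v"] by simp
  then have "Cq I x \<eta> 1 (x k) + (\<Sum>i\<in>I - {k}. B i) \<le> Cq I x \<eta> 1 M"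
    using Cq_expansion_at_data_point[OF fin k, of x \<eta> 1 v] eta[OF k]
    by (simp add: v_def B_def)
  moreover have B_nonneg: "B i \<ge> 0" if "i \<in> I - {k}" for i
    using that inj k eta[of i] bregman_norm_powr_nonneg[of "x k - x i" 1 v]
    by (auto simp: B_def inj_on_def intro!: mult_nonneg_nonneg)
  ultimately have "(\<Sum>i\<in>I - {k}. B i) = 0"
    using M_le sum_nonneg[of "I - {k}" B] by fastforce
  then have B0: "B i = 0" if "i \<in> I - {k}" for i
    using sum_nonneg_eq_0_iff[of "I - {k}" B] fin that B_nonneg by blast
  have "\<exists>c. x i = x k + c *\<^sub>R v" if "i \<in> I" for i
  proof (cases "i = k")
    case False
    with that inj k have "x k - x i \<noteq> 0" by (auto simp: inj_on_def)
    moreover have "v \<noteq> 0" using xk by (simp add: v_def)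
    moreover have "bregman_norm_powr 1 (x k - x i) v = 0"
      using B0[of i] eta[OF that] that False by (simp add: B_def)
    ultimately obtain c where "x k - x i = c *\<^sub>R v"
      using bregman_norm_powr_1_eq_0_imp_parallel by blast
    then have "x i = x k + (- c) *\<^sub>R v" by (simp add: algebra_simps)
    then show ?thesis ..
  qed (auto intro: exI[of _ 0])
  then have "collinear (x ` I)" unfolding collinear_alt by blast
  then show False using not_line by simp
qed

lemma weight_pos: "\<eta> i > 0 \<Longrightarrow> y \<noteq> x i \<Longrightarrow> weight x \<eta> q i y > 0"
  by (simp add: weight_def)

lemma T1_minus_data_point:
  assumes fin: "finite I" and k: "k \<in> I" and eta: "\<And>i. i \<in> I \<Longrightarrow> \<eta> i > 0"
    and y: "y \<notin> x ` I"
  shows "T1 I x \<eta> q y - x k = pull I x \<eta> q k y /\<^sub>R (\<Sum>i\<in>I. weight x \<eta> q i y)"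
proof -
  define W where "W = (\<Sum>i\<in>I. weight x \<eta> q i y)"
  have "W > 0"
    unfolding W_def using fin k eta y by (intro sum_pos weight_pos) auto
  have "pull I x \<eta> q k y = (\<Sum>i\<in>I. weight x \<eta> q i y *\<^sub>R (x i - x k))"
    unfolding pull_def using fin k by (simp add: sum.remove)
  also have "\<dots> = (\<Sum>i\<in>I. weight x \<eta> q i y *\<^sub>R x i) - W *\<^sub>R x k"
    by (simp add: W_def scaleR_diff_right sum_subtractf scaleR_sum_left)
  moreover have "T1 I x \<eta> q y = (\<Sum>i\<in>I. weight x \<eta> q i y *\<^sub>R x i) /\<^sub>R W"
    using y by (simp add: T1_def W_def weight_def)
  ultimately show ?thesis
    using \<open>W > 0\<close> by (simp add: W_def[symmetric] scaleR_diff_right)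
qed

lemma tendsto_dist_powr_at:
  fixes p :: "'a::metric_space"
  assumes "q \<ge> 1"
  shows "((\<lambda>y. dist y p powr (q - 1)) \<longlongrightarrow> (if q = 1 then 1 else 0)) (at p)"
proof (cases "q = 1")
  case True
  have "\<forall>\<^sub>F y in at p. 1 = dist y p powr (q - 1)"
    using True by (simp add: eventually_at_filter)
  then show ?thesis using True by (simp add: tendsto_eventually)
next
  case False
  have "((\<lambda>y. dist y p) \<longlongrightarrow> 0) (at p)"
    using tendsto_dist[OF tendsto_ident_at tendsto_const, of p p] by simp
  then show ?thesis
    using False assms by (auto intro!: tendsto_zero_powrI)
qed

lemma T1_expands_near_data_point:
  assumes fin: "finite I" and inj: "inj_on x I" and eta: "\<And>i. i \<in> I \<Longrightarrow> \<eta> i > 0"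
    and q: "q \<ge> 1" and k: "k \<in> I"
    and pull_large: "norm (pull I x \<eta> q k (x k)) > (if q = 1 then \<eta> k else 0)"
  shows "\<exists>c>1. \<forall>\<^sub>F y in at (x k). c * dist y (x k) \<le> dist (T1 I x \<eta> q y) (x k)"
proof -
  define R where "R = pull I x \<eta> q k (x k)"
  define L where "L = (if q = 1 then \<eta> k else 0)"
  define S where "S y = (\<Sum>i\<in>I - {k}. weight x \<eta> q i y)" for y
  define D where "D y = \<eta> k powr q * dist y (x k) powr (q - 1) + S y * dist y (x k)" for y
  obtain c where c: "c > 1" "c * L < norm R"
  proof (cases "L = 0")
    case False
    then have "L > 0" using eta[OF k] by (simp add: L_def split: if_splits)
    then have "1 < norm R / L" using pull_large[folded L_def R_def] by simp
    then obtain c where "1 < c" "c < norm R / L" using dense by blast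
    then show ?thesis using that \<open>L > 0\<close> by (simp add: field_simps)
  qed (use pull_large[folded L_def R_def] in \<open>auto intro: that[of 2]\<close>)
  have cont: "isCont (weight x \<eta> q i) (x k)" if "i \<in> I - {k}" for i
    using that inj k unfolding weight_def by (auto simp: inj_on_def intro!: continuous_intros)
  have "(pull I x \<eta> q k \<longlongrightarrow> R) (at (x k))"
    unfolding pull_def R_def using cont
    by (intro tendsto_sum tendsto_scaleR tendsto_const) (auto simp: isCont_def)
  moreover have "(S \<longlongrightarrow> S (x k)) (at (x k))"
    unfolding S_def using cont by (intro tendsto_sum) (auto simp: isCont_def)
  moreover have "((\<lambda>y. dist y (x k)) \<longlongrightarrow> 0) (at (x k))"
    using tendsto_dist[OF tendsto_ident_at tendsto_const, of "x k" "x k"] by simp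
  ultimately have "((\<lambda>y. norm (pull I x \<eta> q k y) - c * D y)
      \<longlongrightarrow> norm R - c * (\<eta> k powr q * (if q = 1 then 1 else 0) + S (x k) * 0)) (at (x k))"
    unfolding D_def by (intro tendsto_intros tendsto_dist_powr_at q)
  moreover have "\<eta> k powr q * (if q = 1 then 1 else 0) = L"
    using eta[OF k] by (simp add: L_def)
  ultimately have "\<forall>\<^sub>F y in at (x k). c * D y < norm (pull I x \<eta> q k y)"
    using c order_tendstoD(1)[of _ "norm R - c * L" _ 0] by (force elim: eventually_mono)
  moreover have "\<forall>\<^sub>F y in at (x k). y \<notin> x ` I"
    using islimpt_finite[of "x ` I" "x k"] fin by (simp add: islimpt_iff_eventually)
  ultimately have "\<forall>\<^sub>F y in at (x k). c * dist y (x k) \<le> dist (T1 I x \<eta> q y) (x k)"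
  proof eventually_elim
    case (elim y)
    define d where "d = dist y (x k)"
    define W where "W = (\<Sum>i\<in>I. weight x \<eta> q i y)"
    have "d > 0" using elim k by (auto simp: d_def)
    have W: "W = \<eta> k powr q * d powr (q - 2) + S y"
      using fin k by (simp add: W_def S_def sum.remove weight_def d_def dist_norm)
    have "W > 0" using fin k eta elim unfolding W_def by (intro sum_pos weight_pos) auto
    have "d * W = D y"
      using powr_add[of d "q - 2" 1] \<open>d > 0\<close> by (simp add: W D_def d_def algebra_simps)
    then have "c * d * W < norm (pull I x \<eta> q k y)" using elim by (simp add: mult.assoc)
    then have "c * d < norm (pull I x \<eta> q k y) / W" using \<open>W > 0\<close> by (simp add: field_simps)
    then show ?case
      using T1_minus_data_point[OF fin k eta elim(2)] \<open>W > 0\<close>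
      by (simp add: W_def d_def dist_norm divide_inverse mult.commute)
  qed
  then show ?thesis using c by blast
qed

lemma orbit_leaves_ball_of_repelling_point:
  fixes T :: "'a::metric_space \<Rightarrow> 'a"
  assumes c: "c > 1"
    and expand: "\<And>z. z \<in> ball p \<delta> - {p} \<Longrightarrow> c * dist p z \<le> dist p (T z)"
    and y: "y \<in> ball p \<delta> - {p}"
  shows "\<exists>s\<ge>1. (\<forall>j<s. (T ^^ j) y \<in> ball p \<delta>) \<and> (T ^^ s) y \<notin> ball p \<delta>"
proof -
  have "dist p y > 0" using y by auto
  have grow: "c ^ n * dist p y \<le> dist p ((T ^^ n) y)"
    if "\<forall>j<n. (T ^^ j) y \<in> ball p \<delta>" for n
    using that
  proof (induction n)
    case (Suc n)
    then have IH: "c ^ n * dist p y \<le> dist p ((T ^^ n) y)" by simp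
    moreover have "0 < c ^ n * dist p y" using c \<open>dist p y > 0\<close> by simp
    ultimately have "(T ^^ n) y \<in> ball p \<delta> - {p}" using Suc.prems by auto
    then have "c * dist p ((T ^^ n) y) \<le> dist p ((T ^^ Suc n) y)" using expand by simp
    moreover have "c * (c ^ n * dist p y) \<le> c * dist p ((T ^^ n) y)" using IH c by simp
    ultimately show ?case by simp
  qed simp
  obtain n where "\<delta> / dist p y < c ^ n" using real_arch_pow[OF c] by blast
  then have "\<delta> < c ^ n * dist p y" using \<open>dist p y > 0\<close> by (simp add: field_simps)
  then have "\<exists>s. (T ^^ s) y \<notin> ball p \<delta>"
  proof (rule contrapos_pp)
    assume "\<not> (\<exists>s. (T ^^ s) y \<notin> ball p \<delta>)"
    then have "\<forall>j. (T ^^ j) y \<in> ball p \<delta>" by blast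
    then have "c ^ n * dist p y \<le> dist p ((T ^^ n) y)" "dist p ((T ^^ n) y) < \<delta>"
      using grow[of n] by auto
    then show "\<not> \<delta> < c ^ n * dist p y" by linarith
  qed
  then obtain s where s: "(T ^^ s) y \<notin> ball p \<delta>" "\<forall>j<s. (T ^^ j) y \<in> ball p \<delta>"
    using exists_least_iff[of "\<lambda>s. (T ^^ s) y \<notin> ball p \<delta>"] by blast
  moreover have "s \<noteq> 0" using s(1) y by (intro notI) auto
  ultimately show ?thesis by (auto intro!: exI[of _ s])
qed

theorem lemma3:
  fixes x :: "nat \<Rightarrow> 'a::euclidean_space" and \<eta> :: "nat \<Rightarrow> real"
    and m k :: nat and q :: real and M :: 'a
  assumes distinct: "inj_on x {1..m}"
    and not_line: "\<not> collinear (x ` {1..m})"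
    and eta_pos: "\<And>i. i \<in> {1..m} \<Longrightarrow> \<eta> i > 0"
    and q: "1 \<le> q" "q < 2"
    and M_min: "\<And>z. Cq {1..m} x \<eta> q M \<le> Cq {1..m} x \<eta> q z"
    and k: "k \<in> {1..m}"
    and xk: "x k \<noteq> M"
  shows "\<exists>\<delta>0>0. \<forall>y \<in> ball (x k) \<delta>0 - {x k}.
           \<exists>s::nat. s \<ge> 1 \<and>
             (\<forall>j<s. (T1 {1..m} x \<eta> q ^^ j) y \<in> ball (x k) \<delta>0) \<and>
             (T1 {1..m} x \<eta> q ^^ s) y \<notin> ball (x k) \<delta>0"
proof -
  have "norm (pull {1..m} x \<eta> q k (x k)) > (if q = 1 then \<eta> k else 0)"
  proof (cases "q = 1")
    case True
    then show ?thesis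
      using norm_pull_gt_weight_at_data_point[of "{1..m}" x \<eta> k M, OF _ distinct not_line eta_pos k]
        M_min xk by simp
  next
    case False
    then show ?thesis
      using pull_nonzero_at_data_point[of "{1..m}" x \<eta> q k M, OF _ distinct eta_pos _ k M_min xk]
        q(1) by simp
  qed
  then obtain c where c: "c > 1"
    and "\<forall>\<^sub>F y in at (x k). c * dist y (x k) \<le> dist (T1 {1..m} x \<eta> q y) (x k)"
    using T1_expands_near_data_point[of "{1..m}" x \<eta> q k, OF _ distinct eta_pos q(1) k] by auto
  then obtain \<delta> where "\<delta> > 0" and expand: "\<And>y. y \<in> ball (x k) \<delta> - {x k} \<Longrightarrow>
      c * dist (x k) y \<le> dist (x k) (T1 {1..m} x \<eta> q y)"
    unfolding eventually_at by (auto simp: dist_commute)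
  then show ?thesis
    using orbit_leaves_ball_of_repelling_point[OF c expand] by blast
qed

end
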